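(* Assume $\operatorname{non}(\mathcal N)=\mathfrak c$. Then $\mathcal{ND}_{\mathfrak c}$ is strongly $\mathfrak c$-algebrable in $\left(\mathbb R^{[0,1]}\right)^{\mathfrak c}$.
   Context: For a regular infinite cardinal $\kappa$, a $\kappa$-sequence $(x_\alpha)_{\alpha<\kappa}$ converges to $x$ if for every neighbourhood $U$ of $x$ there is $\alpha_0<\kappa$ with $x_\alpha\in U$ for all $\alpha_0<\alpha<\kappa$; $\left(\mathbb R^{[0,1]}\right)^{\kappa}$ is the commutative real algebra of $\kappa$-sequences of functions $[0,1]\to\mathbb R$ with indexwise operations. $\lambda$ is Lebesgue measure, $\mathcal N$ the null subsets of $[0,1]$, $\operatorname{non}(\mathcal N)$ the least cardinality of a non-null subset of $[0,1]$. $\mathcal{ND}_{\kappa}$: $\kappa$-sequences of Lebesgue measurable $f_\alpha:[0,1]\to\mathbb R$ such that there is an integrable $g$ with $|f_\alpha|\le g$ a.e. for all $\alpha$, $f_\alpha\to f$ a.e. for some integrable $f$, and $\int|f_\alpha-f|\,d\lambda\not\to0$. $S$ is strongly $\mu$-algebrable if there is a set $X$ of $\mu$ algebraically independent elements such that every nonzero element of the (non-unital) algebra generated by $X$ belongs to $S$. *)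

theory Defs
  imports "HOL-Analysis.Analysis" "HOL-Library.Poly_Mapping"
begin

text \<open>Elements of (R^[0,1])^kappa: kappa-indexed families of functions [0,1] -> R,
  represented as functions on all reals that vanish outside [0,1]
  (this subalgebra of 'i => real => real is isomorphic to (R^[0,1])^kappa).\<close>

type_synonym 'i seqfun = "'i \<Rightarrow> real \<Rightarrow> real"

definition seq_carrier :: "'i seqfun set" where
  "seq_carrier = {F. \<forall>\<alpha> x. x \<notin> {0..1} \<longrightarrow> F \<alpha> x = 0}"

definition conv_along :: "('i \<times> 'i) set \<Rightarrow> ('i \<Rightarrow> 'a::topological_space) \<Rightarrow> 'a \<Rightarrow> bool" where
  "conv_along r s l \<longleftrightarrow>
     (\<forall>U. open U \<and> l \<in> U \<longrightarrow>
        (\<exists>\<alpha>0 \<in> Field r. \<forall>\<alpha>. (\<alpha>0, \<alpha>) \<in> r \<and> \<alpha> \<noteq> \<alpha>0 \<longrightarrow> s \<alpha> \<in> U))"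

abbreviation lebI :: "real measure" where
  "lebI \<equiv> lebesgue_on {0..1}"

definition ND :: "('i \<times> 'i) set \<Rightarrow> 'i seqfun set" where
  "ND r = {F \<in> seq_carrier.
      (\<forall>\<alpha>. F \<alpha> \<in> borel_measurable lebI) \<and>
      (\<exists>g. integrable lebI g \<and> (\<forall>\<alpha>. AE x in lebI. \<bar>F \<alpha> x\<bar> \<le> g x)) \<and>
      (\<exists>f. integrable lebI f \<and>
           (AE x in lebI. conv_along r (\<lambda>\<alpha>. F \<alpha> x) (f x)) \<and>
           \<not> conv_along r (\<lambda>\<alpha>. LINT x|lebI. \<bar>F \<alpha> x - f x\<bar>) 0)}"

inductive_set gen_alg :: "'i seqfun set \<Rightarrow> 'i seqfun set" for X where
  gen_base: "F \<in> X \<Longrightarrow> F \<in> gen_alg X"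
| gen_add: "F \<in> gen_alg X \<Longrightarrow> G \<in> gen_alg X \<Longrightarrow> (\<lambda>\<alpha> x. F \<alpha> x + G \<alpha> x) \<in> gen_alg X"
| gen_smult: "F \<in> gen_alg X \<Longrightarrow> (\<lambda>\<alpha> x. c * F \<alpha> x) \<in> gen_alg X"
| gen_mult: "F \<in> gen_alg X \<Longrightarrow> G \<in> gen_alg X \<Longrightarrow> (\<lambda>\<alpha> x. F \<alpha> x * G \<alpha> x) \<in> gen_alg X"

definition peval :: "(('i seqfun \<Rightarrow>\<^sub>0 nat) \<Rightarrow>\<^sub>0 real) \<Rightarrow> 'i seqfun" where
  "peval P = (\<lambda>\<alpha> x. \<Sum>mon\<in>Poly_Mapping.keys P. Poly_Mapping.lookup P mon * (\<Prod>v\<in>Poly_Mapping.keys mon. (v::'i seqfun) \<alpha> x ^ Poly_Mapping.lookup mon v))"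

definition alg_indep :: "'i seqfun set \<Rightarrow> bool" where
  "alg_indep X \<longleftrightarrow>
     (\<forall>P. P \<noteq> 0 \<and> Poly_Mapping.lookup P 0 = 0 \<and> (\<forall>m\<in>Poly_Mapping.keys P. Poly_Mapping.keys m \<subseteq> X)
          \<longrightarrow> peval P \<noteq> (\<lambda>\<alpha> x. 0))"

definition strongly_c_algebrable :: "'i seqfun set \<Rightarrow> bool" where
  "strongly_c_algebrable S \<longleftrightarrow>
     (\<exists>X. X \<subseteq> seq_carrier \<and> (card_of X, card_of (UNIV :: real set)) \<in> ordIso \<and> alg_indep X \<and>
          (\<forall>F \<in> gen_alg X. F \<noteq> (\<lambda>\<alpha> x. 0) \<longrightarrow> F \<in> S))"

definition non_N_eq_c :: bool where
  "non_N_eq_c \<longleftrightarrow>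
     (\<exists>A. A \<subseteq> {0..1::real} \<and> A \<notin> null_sets lebesgue \<and> (card_of A, card_of (UNIV :: real set)) \<in> ordIso) \<and>
     (\<forall>A. A \<subseteq> {0..1::real} \<and> A \<notin> null_sets lebesgue \<longrightarrow> (card_of (UNIV :: real set), card_of A) \<in> ordLeq)"

end

theory Submission
  imports Defs "HOL-Library.Countable_Set_Type"
begin

(* Since non(N) = c, every subset of [0,1] of size below c is null. Enumerating [0,1] along the
   well-order r of type c, the sets S alpha of points enumerated before alpha are therefore null,
   increase with alpha and exhaust [0,1]. For continuous h the sequence 1_(S alpha) * h then
   converges to h at every point, while the L1-distance to h is the constant integral of |h|.
   The generators are 1_(S alpha)(x) * exp(t x) for t in a Q-linearly independent set of size c:
   a product of generators is again of this shape with t replaced by the sum of the exponents, so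
   every nonzero element of the generated algebra is 1_(S alpha) * h with h a nonzero continuous
   function (hence in ND), and algebraic independence reduces to the linear independence of
   exponentials with distinct exponents. *)

unbundle cardinal_syntax

lemma exp_sum_vanishing_on_open_imp_zero:
  fixes L :: "real set" and U :: "real set"
  assumes "open U" "U \<noteq> {}" "finite L" "\<forall>x\<in>U. (\<Sum>l\<in>L. c l * exp (l * x)) = 0" "l \<in> L"
  shows "c l = 0"
using assms(3-) proof (induction L arbitrary: c l rule: finite_induct)
  case empty then show ?case by simp
next
  case (insert m L)
  \<comment> \<open>Multiplying by exp (- m x) and differentiating removes the term of m and scales the
    others by l - m.\<close>
  define G where "G = (\<lambda>x. (\<Sum>l\<in>L. c l * exp ((l - m) * x)) + c m)"
  define G' where "G' = (\<lambda>x. (\<Sum>l\<in>L. c l * (l - m) * exp ((l - m) * x)))"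
  have G_zero: "G x = 0" if "x \<in> U" for x
  proof -
    have "G x = exp (- m * x) * (\<Sum>l\<in>insert m L. c l * exp (l * x))"
      using insert(1,2) by (simp add: G_def sum_distrib_left algebra_simps exp_add[symmetric] exp_diff)
    also have "\<dots> = 0" using insert.prems(1) that by simp
    finally show ?thesis .
  qed
  have G'_zero: "G' x = 0" if x: "x \<in> U" for x
  proof -
    have "(G has_real_derivative G' x) (at x)"
      unfolding G_def G'_def by (auto intro!: derivative_eq_intros sum.cong)
    moreover have "(G has_real_derivative 0) (at x)"
      by (rule has_field_derivative_transform_within_open[where S=U, of "\<lambda>_. 0"])
        (use x G_zero \<open>open U\<close> in auto)
    ultimately show ?thesis by (rule DERIV_unique)
  qed
  have "c l * (l - m) = 0" if "l \<in> L" for l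
  proof (rule insert.IH[of "\<lambda>l. c l * (l - m)"])
    show "\<forall>x\<in>U. (\<Sum>l\<in>L. c l * (l - m) * exp (l * x)) = 0"
    proof
      fix x assume "x \<in> U"
      have "(\<Sum>l\<in>L. c l * (l - m) * exp (l * x)) = exp (m * x) * G' x"
        by (simp add: G'_def sum_distrib_left algebra_simps exp_add[symmetric])
      then show "(\<Sum>l\<in>L. c l * (l - m) * exp (l * x)) = 0" using G'_zero[OF \<open>x \<in> U\<close>] by simp
    qed
  qed (use that in auto)
  then have cL: "c l = 0" if "l \<in> L" for l using that insert(2) by force
  obtain x0 where "x0 \<in> U" using \<open>U \<noteq> {}\<close> by blast
  then have "(\<Sum>l\<in>insert m L. c l * exp (l * x0)) = 0" using insert.prems(1) by blast
  then have "c m * exp (m * x0) = 0" using insert(1,2) cL by simp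
  then show ?case using insert.prems(2) cL by auto
qed

lemma card_of_lists_length_ordLeq_infinite:
  assumes "infinite B"
  shows "|{xs. set xs \<subseteq> B \<and> length xs = n}| \<le>o |B|"
proof (induction n)
  case 0
  obtain b where "b \<in> B" using assms by fastforce
  then have "|{[]::'a list}| \<le>o |B|"
    unfolding card_of_ordLeq[symmetric] by (intro exI[of _ "\<lambda>_. b"]) auto
  moreover have "{xs. set xs \<subseteq> B \<and> length xs = 0} = {[]}" by auto
  ultimately show ?case by simp
next
  case (Suc n)
  let ?L = "{xs. set xs \<subseteq> B \<and> length xs = n}"
  have "{xs. set xs \<subseteq> B \<and> length xs = Suc n} \<subseteq> (\<lambda>(x, xs). x # xs) ` (B \<times> ?L)"
  proof
    fix xs assume "xs \<in> {xs. set xs \<subseteq> B \<and> length xs = Suc n}"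
    then show "xs \<in> (\<lambda>(x, xs). x # xs) ` (B \<times> ?L)" by (cases xs) auto
  qed
  then have "|{xs. set xs \<subseteq> B \<and> length xs = Suc n}| \<le>o |B \<times> ?L|"
    by (rule ordLeq_transitive[OF card_of_mono1 card_of_image])
  moreover have "|B \<times> ?L| \<le>o |B|"
    using card_of_Times_ordLeq_infinite_Field[of "|B|" B ?L] Suc assms
    by (simp add: card_of_Card_order Field_card_of ordLeq_refl card_of_Well_order card_of_card_order_on)
  ultimately show ?case using ordLeq_transitive by blast
qed

lemma card_of_finite_subsets_ordLeq_infinite:
  assumes "infinite B"
  shows "|{t. finite t \<and> t \<subseteq> B}| \<le>o |B|"
proof -
  have "lists B = (\<Union>n. {xs. set xs \<subseteq> B \<and> length xs = n})" by (auto simp: in_lists_conv_set)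
  then have "{t. finite t \<and> t \<subseteq> B} = set ` (\<Union>n. {xs. set xs \<subseteq> B \<and> length xs = n})"
    using Collect_finite_subset_eq_lists[of B] by simp
  moreover have "|\<Union>n. {xs. set xs \<subseteq> B \<and> length xs = n}| \<le>o |B|"
  proof (rule card_of_UNION_ordLeq_infinite[OF assms])
    show "|UNIV::nat set| \<le>o |B|" using assms infinite_iff_card_of_nat by blast
  qed (use card_of_lists_length_ordLeq_infinite[OF assms] in blast)
  ultimately show ?thesis using ordLeq_transitive[OF card_of_image] by simp
qed

interpretation Qspace: vector_space "\<lambda>q::rat. \<lambda>x::real. of_rat q * x"
  by unfold_locales (auto simp: algebra_simps of_rat_add of_rat_mult)

lemma countable_Qspace_span_finite:
  assumes "finite t"
  shows "countable (Qspace.span t)"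
proof -
  have "Qspace.span t = (\<lambda>u. \<Sum>v\<in>t. of_rat (u v) * v) ` (PiE t (\<lambda>_. UNIV))"
  proof
    show "Qspace.span t \<subseteq> (\<lambda>u. \<Sum>v\<in>t. of_rat (u v) * v) ` (PiE t (\<lambda>_. UNIV))"
    proof
      fix y assume "y \<in> Qspace.span t"
      then obtain u where y: "y = (\<Sum>v\<in>t. of_rat (u v) * v)"
        using Qspace.span_finite[OF assms] by auto
      have "y = (\<Sum>v\<in>t. of_rat (restrict u t v) * v)" unfolding y by (rule sum.cong) auto
      then show "y \<in> (\<lambda>u. \<Sum>v\<in>t. of_rat (u v) * v) ` (PiE t (\<lambda>_. UNIV))"
        by (intro image_eqI[where x="restrict u t"]) auto
    qed
  qed (unfold Qspace.span_finite[OF assms], blast)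
  moreover have "countable (PiE t (\<lambda>_. UNIV::rat set))"
    by (rule countable_PiE) (use assms in auto)
  ultimately show ?thesis by simp
qed

lemma Qspace_independent_continuum:
  obtains B :: "real set" where "Qspace.independent B" "(card_of B, card_of (UNIV::real set)) \<in> ordIso"
proof -
  obtain B where B: "Qspace.independent B" "UNIV \<subseteq> Qspace.span B"
    using Qspace.maximal_independent_subset[of UNIV] by auto
  have span_B: "Qspace.span B \<subseteq> (\<Union>t\<in>{t. finite t \<and> t \<subseteq> B}. Qspace.span t)"
  proof
    fix y assume "y \<in> Qspace.span B"
    then obtain t u where "y = (\<Sum>a\<in>t. of_rat (u a) * a)" "finite t" "t \<subseteq> B"
      unfolding Qspace.span_explicit by auto
    moreover have "(\<Sum>a\<in>t. of_rat (u a) * a) \<in> Qspace.span t"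
      using Qspace.span_finite[OF \<open>finite t\<close>] by auto
    ultimately show "y \<in> (\<Union>t\<in>{t. finite t \<and> t \<subseteq> B}. Qspace.span t)" by auto
  qed
  have "infinite B"
  proof
    assume "finite B"
    then have "countable (UNIV::real set)"
      using countable_Qspace_span_finite B(2) countable_subset by blast
    then show False using uncountable_UNIV_real by blast
  qed
  have "|\<Union>t\<in>{t. finite t \<and> t \<subseteq> B}. Qspace.span t| \<le>o |B|"
  proof (rule card_of_UNION_ordLeq_infinite[OF \<open>infinite B\<close>
        card_of_finite_subsets_ordLeq_infinite[OF \<open>infinite B\<close>]], safe)
    fix t assume "finite t" "t \<subseteq> B"
    then have "|Qspace.span t| \<le>o |UNIV::nat set|"
      using countable_Qspace_span_finite countable_card_of_nat by blast
    then show "|Qspace.span t| \<le>o |B|"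
      using \<open>infinite B\<close> infinite_iff_card_of_nat ordLeq_transitive by blast
  qed
  then have "|UNIV::real set| \<le>o |B|"
    by (rule ordLeq_transitive[OF card_of_mono1[OF subset_trans[OF B(2) span_B]]])
  then have "(card_of B, card_of (UNIV::real set)) \<in> ordIso"
    using card_of_mono1[of B UNIV] ordIso_iff_ordLeq by (metis subset_UNIV)
  then show ?thesis using that B(1) by blast
qed

definition monomial_exponent :: "('v \<Rightarrow> real) \<Rightarrow> ('v \<Rightarrow>\<^sub>0 nat) \<Rightarrow> real" where
  "monomial_exponent \<tau> m = (\<Sum>v\<in>Poly_Mapping.keys m. real (Poly_Mapping.lookup m v) * \<tau> v)"

lemma peval_exponential:
  assumes "\<forall>m\<in>Poly_Mapping.keys P. Poly_Mapping.keys m \<subseteq> X"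
    and "\<forall>v\<in>X. v \<alpha> x = exp (\<tau> v * x)"
  shows "peval P \<alpha> x =
    (\<Sum>m\<in>Poly_Mapping.keys P. Poly_Mapping.lookup P m * exp (monomial_exponent \<tau> m * x))"
  unfolding peval_def
proof (rule sum.cong[OF refl])
  fix m assume m: "m \<in> Poly_Mapping.keys P"
  have "(\<Prod>v\<in>Poly_Mapping.keys m. v \<alpha> x ^ Poly_Mapping.lookup m v)
      = (\<Prod>v\<in>Poly_Mapping.keys m. exp (real (Poly_Mapping.lookup m v) * (\<tau> v * x)))"
  proof (rule prod.cong[OF refl])
    fix v assume "v \<in> Poly_Mapping.keys m"
    then have "v \<alpha> x = exp (\<tau> v * x)" using assms m by blast
    then show "v \<alpha> x ^ Poly_Mapping.lookup m v = exp (real (Poly_Mapping.lookup m v) * (\<tau> v * x))"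
      by (simp add: exp_of_nat_mult)
  qed
  also have "\<dots> = exp (monomial_exponent \<tau> m * x)"
    by (simp add: monomial_exponent_def exp_sum[symmetric] sum_distrib_right mult.assoc)
  finally show "Poly_Mapping.lookup P m * (\<Prod>v\<in>Poly_Mapping.keys m. v \<alpha> x ^ Poly_Mapping.lookup m v)
     = Poly_Mapping.lookup P m * exp (monomial_exponent \<tau> m * x)"
    by simp
qed

lemma inj_on_monomial_exponent:
  fixes \<tau> :: "'v \<Rightarrow> real"
  assumes indep: "Qspace.independent (\<tau> ` X)" and inj: "inj_on \<tau> X"
  shows "inj_on (monomial_exponent \<tau>) {m. Poly_Mapping.keys m \<subseteq> X}"
proof
  fix m1 m2 :: "'v \<Rightarrow>\<^sub>0 nat"
  assume "m1 \<in> {m. Poly_Mapping.keys m \<subseteq> X}" "m2 \<in> {m. Poly_Mapping.keys m \<subseteq> X}"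
    and eq: "monomial_exponent \<tau> m1 = monomial_exponent \<tau> m2"
  define K where "K = Poly_Mapping.keys m1 \<union> Poly_Mapping.keys m2"
  have "finite K" unfolding K_def by simp
  have "K \<subseteq> X" unfolding K_def using \<open>m1 \<in> _\<close> \<open>m2 \<in> _\<close> by auto
  then have inj_K: "inj_on \<tau> K" using inj inj_on_subset by blast
  have exponent_K: "monomial_exponent \<tau> m = (\<Sum>v\<in>K. real (Poly_Mapping.lookup m v) * \<tau> v)"
    if "Poly_Mapping.keys m \<subseteq> K" for m :: "'v \<Rightarrow>\<^sub>0 nat"
    unfolding monomial_exponent_def
    by (rule sum.mono_neutral_left) (use \<open>finite K\<close> that in \<open>auto simp: in_keys_iff\<close>)
  define u where "u = (\<lambda>b. of_int (int (Poly_Mapping.lookup m1 (inv_into K \<tau> b))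
                                 - int (Poly_Mapping.lookup m2 (inv_into K \<tau> b))) :: rat)"
  have "(\<Sum>b\<in>\<tau> ` K. of_rat (u b) * b) = (\<Sum>v\<in>K. of_rat (u (\<tau> v)) * \<tau> v)"
    by (rule sum.reindex[OF inj_K, unfolded comp_def])
  also have "\<dots> = (\<Sum>v\<in>K. (real (Poly_Mapping.lookup m1 v) - real (Poly_Mapping.lookup m2 v)) * \<tau> v)"
    by (rule sum.cong[OF refl]) (simp add: u_def inv_into_f_f[OF inj_K] of_rat_diff)
  also have "\<dots> = 0"
    using eq exponent_K[of m1] exponent_K[of m2] unfolding K_def
    by (simp add: left_diff_distrib sum_subtractf)
  finally have combination_zero: "(\<Sum>b\<in>\<tau> ` K. of_rat (u b) * b) = 0" .
  have "Poly_Mapping.lookup m1 v = Poly_Mapping.lookup m2 v" for v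
  proof (cases "v \<in> K")
    case True
    have "u (\<tau> v) = 0"
      by (rule Qspace.independentD[OF indep _ _ combination_zero])
        (use \<open>finite K\<close> \<open>K \<subseteq> X\<close> True in auto)
    then show ?thesis by (simp add: u_def inv_into_f_f[OF inj_K True])
  next
    case False
    then show ?thesis unfolding K_def by (auto simp: in_keys_iff)
  qed
  then show "m1 = m2" by (rule poly_mapping_eqI)
qed

lemma alg_indep_exponential:
  fixes X :: "'i seqfun set" and U :: "real set"
  assumes "Qspace.independent (\<tau> ` X)" "inj_on \<tau> X" "open U" "U \<noteq> {}"
    and exponential: "\<forall>x\<in>U. \<exists>\<alpha>. \<forall>v\<in>X. v \<alpha> x = exp (\<tau> v * x)"
  shows "alg_indep X"
  unfolding alg_indep_def
proof (intro allI impI notI)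
  fix P :: "('i seqfun \<Rightarrow>\<^sub>0 nat) \<Rightarrow>\<^sub>0 real"
  assume P: "P \<noteq> 0 \<and> Poly_Mapping.lookup P 0 = 0 \<and> (\<forall>m\<in>Poly_Mapping.keys P. Poly_Mapping.keys m \<subseteq> X)"
    and vanishes: "peval P = (\<lambda>\<alpha> x. 0)"
  define K where "K = Poly_Mapping.keys P"
  let ?e = "monomial_exponent \<tau>"
  have inj_K: "inj_on ?e K"
    using inj_on_subset[OF inj_on_monomial_exponent[OF assms(1,2)]] P unfolding K_def by blast
  define c where "c = (\<lambda>l. Poly_Mapping.lookup P (inv_into K ?e l))"
  have "c l = 0" if "l \<in> ?e ` K" for l
  proof (rule exp_sum_vanishing_on_open_imp_zero[OF \<open>open U\<close> \<open>U \<noteq> {}\<close> _ _ that])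
    show "finite (?e ` K)" unfolding K_def by simp
    show "\<forall>x\<in>U. (\<Sum>l\<in>?e ` K. c l * exp (l * x)) = 0"
    proof
      fix x assume "x \<in> U"
      then obtain \<alpha> where "\<forall>v\<in>X. v \<alpha> x = exp (\<tau> v * x)" using exponential by blast
      have "(\<Sum>l\<in>?e ` K. c l * exp (l * x)) = (\<Sum>m\<in>K. c (?e m) * exp (?e m * x))"
        by (rule sum.reindex[OF inj_K, unfolded comp_def])
      also have "\<dots> = (\<Sum>m\<in>K. Poly_Mapping.lookup P m * exp (?e m * x))"
        by (rule sum.cong[OF refl]) (simp add: c_def inv_into_f_f[OF inj_K])
      also have "\<dots> = peval P \<alpha> x"
        unfolding K_def by (rule peval_exponential[symmetric]) (use P \<open>\<forall>v\<in>X. _\<close> in auto)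
      finally show "(\<Sum>l\<in>?e ` K. c l * exp (l * x)) = 0" using vanishes by simp
    qed
  qed
  moreover obtain m where "m \<in> K" using P unfolding K_def by (metis ex_in_conv keys_eq_empty)
  ultimately have "c (?e m) = 0" by blast
  then have "Poly_Mapping.lookup P m = 0" by (simp add: c_def inv_into_f_f[OF inj_K \<open>m \<in> K\<close>])
  then show False using \<open>m \<in> K\<close> unfolding K_def by (simp add: in_keys_iff)
qed

lemma Card_order_infinite_no_greatest:
  assumes "Card_order r" "Field r = UNIV" "infinite (UNIV::'i set)"
  shows "\<exists>\<alpha>. (\<gamma>::'i) \<in> underS r \<alpha>"
proof -
  have "Field r \<noteq> under r \<gamma>" using Card_order_infinite_not_under[OF assms(1)] assms(2,3) by auto
  then obtain b where b: "(b, \<gamma>) \<notin> r" using assms(2) unfolding under_def by auto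
  have "Well_order r" using assms(1) unfolding card_order_on_def by auto
  then have "total_on UNIV r" "Refl r"
    using assms(2) unfolding well_order_on_def linear_order_on_def partial_order_on_def preorder_on_def
    by auto
  then have "b \<noteq> \<gamma>" using b assms(2) unfolding refl_on_def by auto
  then have "(\<gamma>, b) \<in> r" using b \<open>total_on UNIV r\<close> unfolding total_on_def by blast
  with \<open>b \<noteq> \<gamma>\<close> show ?thesis unfolding underS_def by auto
qed

lemma null_if_card_less_continuum:
  assumes "non_N_eq_c" "A \<subseteq> {0..1::real}" "|A| <o |UNIV::real set|"
  shows "A \<in> null_sets lebesgue"
  using assms not_ordLess_ordLeq unfolding non_N_eq_c_def by blast

definition null_exhaustion :: "('i \<times> 'i) set \<Rightarrow> ('i \<Rightarrow> real set) \<Rightarrow> bool" where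
  "null_exhaustion r S \<longleftrightarrow>
     (\<forall>\<alpha>. S \<alpha> \<subseteq> {0..1} \<and> S \<alpha> \<in> null_sets lebesgue) \<and>
     (\<forall>x\<in>{0..1}. \<exists>\<gamma>. \<forall>\<alpha>. \<gamma> \<in> underS r \<alpha> \<longrightarrow> x \<in> S \<alpha>)"

lemma null_exhaustion_exists:
  fixes r :: "('i \<times> 'i) set"
  assumes "Card_order r" "Field r = UNIV"
    and "(card_of (UNIV::'i set), card_of (UNIV::real set)) \<in> ordIso" "non_N_eq_c"
  obtains S where "null_exhaustion r S"
proof -
  obtain f :: "'i \<Rightarrow> real" where f: "bij_betw f UNIV UNIV"
    using assms(3) card_of_ordIso by blast
  define a where "a = (\<lambda>i. max 0 (min 1 (f i)))"
  define S where "S = (\<lambda>\<alpha>. a ` underS r \<alpha>)"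
  have "S \<alpha> \<subseteq> {0..1}" for \<alpha> unfolding S_def a_def by auto
  moreover have "S \<alpha> \<in> null_sets lebesgue" for \<alpha>
  proof (rule null_if_card_less_continuum[OF assms(4) \<open>S \<alpha> \<subseteq> {0..1}\<close>])
    have "|underS r \<alpha>| <o r" using card_of_underS[OF assms(1)] assms(2) by simp
    moreover have "(r, card_of (UNIV::'i set)) \<in> ordIso"
      using ordIso_symmetric[OF card_of_Field_ordIso[OF assms(1)]] assms(2) by simp
    ultimately have "|underS r \<alpha>| <o |UNIV::real set|"
      using ordLess_ordIso_trans[OF ordLess_ordIso_trans assms(3)] by blast
    then show "|S \<alpha>| <o |UNIV::real set|"
      unfolding S_def using card_of_image ordLeq_ordLess_trans by blast
  qed
  moreover have "\<exists>\<gamma>. \<forall>\<alpha>. \<gamma> \<in> underS r \<alpha> \<longrightarrow> x \<in> S \<alpha>" if "x \<in> {0..1}" for x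
  proof -
    obtain \<gamma> where "f \<gamma> = x" using f unfolding bij_betw_def by (metis UNIV_I imageE)
    then have "a \<gamma> = x" using that unfolding a_def by auto
    then show ?thesis unfolding S_def by blast
  qed
  ultimately show ?thesis using that unfolding null_exhaustion_def by blast
qed

lemma indicator_mult_continuous_in_ND:
  fixes r :: "('i \<times> 'i) set"
  assumes r: "Field r = UNIV" "\<And>\<gamma>. \<exists>\<alpha>. \<gamma> \<in> underS r \<alpha>"
    and S: "null_exhaustion r S"
    and h: "continuous_on {0..1} h"
    and F: "F = (\<lambda>\<alpha> x. indicator (S \<alpha>) x * h x)" "F \<noteq> (\<lambda>\<alpha> x. 0)"
  shows "F \<in> ND r"
proof -
  have S_sub: "S \<alpha> \<subseteq> {0..1}" and S_null: "S \<alpha> \<in> null_sets lebesgue" for \<alpha>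
    using S unfolding null_exhaustion_def by auto
  have h_meas: "h \<in> borel_measurable lebI"
    by (rule continuous_imp_measurable_on_sets_lebesgue[OF h]) simp
  have F_meas: "F \<alpha> \<in> borel_measurable lebI" for \<alpha>
  proof -
    have "indicator (S \<alpha>) \<in> borel_measurable lebI"
      by (rule measurable_restrict_space1) (use S_null[of \<alpha>] in auto)
    then show ?thesis unfolding F(1) using h_meas by measurable
  qed
  have abs_h: "continuous_on {0..1} (\<lambda>x. \<bar>h x\<bar>)" using h by (intro continuous_intros)
  have conv: "AE x in lebI. conv_along r (\<lambda>\<alpha>. F \<alpha> x) (h x)"
  proof (rule AE_I2)
    fix x assume "x \<in> space lebI"
    then have "x \<in> {0..1}" by simp
    then obtain \<gamma> where \<gamma>: "\<forall>\<alpha>. \<gamma> \<in> underS r \<alpha> \<longrightarrow> x \<in> S \<alpha>"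
      using S unfolding null_exhaustion_def by blast
    show "conv_along r (\<lambda>\<alpha>. F \<alpha> x) (h x)"
      unfolding conv_along_def
    proof (intro allI impI bexI[of _ \<gamma>])
      fix U \<alpha> assume "open U \<and> h x \<in> U" "(\<gamma>, \<alpha>) \<in> r \<and> \<alpha> \<noteq> \<gamma>"
      then show "F \<alpha> x \<in> U" using \<gamma> unfolding F(1) underS_def by auto
    qed (use r in auto)
  qed
  define c where "c = (LINT x|lebI. \<bar>h x\<bar>)"
  have distance: "(LINT x|lebI. \<bar>F \<alpha> x - h x\<bar>) = c" for \<alpha>
    unfolding c_def
  proof (rule integral_cong_AE)
    show "(\<lambda>x. \<bar>F \<alpha> x - h x\<bar>) \<in> borel_measurable lebI" using F_meas h_meas by measurable
    show "(\<lambda>x. \<bar>h x\<bar>) \<in> borel_measurable lebI" using h_meas by measurable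
    have "AE x in lebI. x \<notin> S \<alpha>"
      using AE_not_in[OF S_null[of \<alpha>]] by (subst AE_restrict_space_iff) (auto elim: AE_mp)
    then show "AE x in lebI. \<bar>F \<alpha> x - h x\<bar> = \<bar>h x\<bar>"
      by (rule AE_mp) (auto simp: F(1))
  qed
  obtain \<alpha>1 x1 where "F \<alpha>1 x1 \<noteq> 0" using F(2) by blast
  then have x1: "x1 \<in> {0..1}" "h x1 \<noteq> 0"
    using S_sub[of \<alpha>1] unfolding F(1) by (auto simp: indicator_def)
  have "c > 0"
  proof (rule ccontr)
    assume "\<not> c > 0"
    moreover have "c \<ge> 0" unfolding c_def by (rule integral_nonneg_AE) auto
    ultimately have "((\<lambda>x. \<bar>h x\<bar>) has_integral 0) (cbox 0 1)"
      using has_integral_integral_lebesgue_on[OF continuous_imp_integrable_real[OF abs_h]]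
      unfolding c_def by simp
    then show False
      using has_integral_0_cbox_imp_0[of 0 1 "\<lambda>x. \<bar>h x\<bar>" x1] abs_h x1 by auto
  qed
  have not_L1: "\<not> conv_along r (\<lambda>\<alpha>. LINT x|lebI. \<bar>F \<alpha> x - h x\<bar>) 0"
  proof
    assume "conv_along r (\<lambda>\<alpha>. LINT x|lebI. \<bar>F \<alpha> x - h x\<bar>) 0"
    then obtain \<alpha>0 where "\<And>\<alpha>. (\<alpha>0, \<alpha>) \<in> r \<and> \<alpha> \<noteq> \<alpha>0 \<Longrightarrow> c \<in> {..<c}"
      unfolding conv_along_def distance using \<open>c > 0\<close>
      by (metis (no_types, lifting) lessThan_iff open_lessThan)
    moreover obtain \<alpha> where "\<alpha>0 \<in> underS r \<alpha>" using r(2) by blast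
    ultimately show False unfolding underS_def by auto
  qed
  have "F \<in> seq_carrier" using S_sub unfolding seq_carrier_def F(1) by (force simp: indicator_def)
  moreover have "AE x in lebI. \<bar>F \<alpha> x\<bar> \<le> \<bar>h x\<bar>" for \<alpha>
    unfolding F(1) by (auto simp: indicator_def abs_mult)
  ultimately show ?thesis
    unfolding ND_def using F_meas conv not_L1 continuous_imp_integrable_real[OF abs_h]
      continuous_imp_integrable_real[OF h] by blast
qed

definition exp_family :: "('i \<Rightarrow> real set) \<Rightarrow> real \<Rightarrow> 'i seqfun" where
  "exp_family S t = (\<lambda>\<alpha> x. indicator (S \<alpha>) x * exp (t * x))"

lemma gen_alg_exp_family:
  assumes "F \<in> gen_alg (exp_family S ` B)"
  shows "\<exists>h. continuous_on UNIV h \<and> F = (\<lambda>\<alpha> x. indicator (S \<alpha>) x * h x)"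
  using assms
proof (induction rule: gen_alg.induct)
  case (gen_base F)
  then obtain t where "F = exp_family S t" by blast
  then show ?case
    unfolding exp_family_def by (intro exI[of _ "\<lambda>x. exp (t * x)"]) (auto intro!: continuous_intros)
next
  case (gen_add F G)
  then obtain h1 h2 where "continuous_on UNIV h1" "F = (\<lambda>\<alpha> x. indicator (S \<alpha>) x * h1 x)"
     "continuous_on UNIV h2" "G = (\<lambda>\<alpha> x. indicator (S \<alpha>) x * h2 x)" by blast
  then show ?case by (intro exI[of _ "\<lambda>x. h1 x + h2 x"]) (auto intro!: continuous_intros simp: algebra_simps)
next
  case (gen_smult F c)
  then obtain h where "continuous_on UNIV h" "F = (\<lambda>\<alpha> x. indicator (S \<alpha>) x * h x)" by blast
  then show ?case by (intro exI[of _ "\<lambda>x. c * h x"]) (auto intro!: continuous_intros simp: algebra_simps)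
next
  case (gen_mult F G)
  then obtain h1 h2 where "continuous_on UNIV h1" "F = (\<lambda>\<alpha> x. indicator (S \<alpha>) x * h1 x)"
     "continuous_on UNIV h2" "G = (\<lambda>\<alpha> x. indicator (S \<alpha>) x * h2 x)" by blast
  then show ?case
    by (intro exI[of _ "\<lambda>x. h1 x * h2 x"]) (auto intro!: continuous_intros simp: indicator_def fun_eq_iff)
qed

lemma alg_indep_exp_family:
  assumes "Qspace.independent B" and covers: "\<forall>x\<in>{0..1}. \<exists>\<alpha>. x \<in> S \<alpha>"
  shows "inj_on (exp_family S) B" and "alg_indep (exp_family S ` B)"
proof -
  show inj: "inj_on (exp_family S) B"
  proof
    fix s t assume eq: "exp_family S s = exp_family S t"
    obtain \<alpha> where "1 \<in> S \<alpha>" using bspec[OF covers, of 1] by auto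
    then have "exp s = exp t" using fun_cong[OF fun_cong[OF eq, of \<alpha>], of 1] unfolding exp_family_def by simp
    then show "s = t" by simp
  qed
  let ?\<tau> = "inv_into B (exp_family S)"
  show "alg_indep (exp_family S ` B)"
  proof (rule alg_indep_exponential[of ?\<tau> _ "{0<..<1}"])
    show "Qspace.independent (?\<tau> ` exp_family S ` B)" using assms(1) inj by simp
    show "\<forall>x\<in>{0<..<1}. \<exists>\<alpha>. \<forall>v\<in>exp_family S ` B. v \<alpha> x = exp (?\<tau> v * x)"
    proof
      fix x :: real assume "x \<in> {0<..<1}"
      then obtain \<alpha> where "x \<in> S \<alpha>" using bspec[OF covers, of x] by auto
      then show "\<exists>\<alpha>. \<forall>v\<in>exp_family S ` B. v \<alpha> x = exp (?\<tau> v * x)"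
      proof (intro exI[of _ \<alpha>] ballI)
        fix v assume "v \<in> exp_family S ` B"
        then obtain t where "t \<in> B" "v = exp_family S t" by blast
        moreover from this have "?\<tau> v = t" by (simp add: inv_into_f_f[OF inj])
        ultimately show "v \<alpha> x = exp (?\<tau> v * x)" using \<open>x \<in> S \<alpha>\<close> by (simp add: exp_family_def)
      qed
    qed
  qed (auto intro: inj_on_inv_into)
qed

theorem mainTheorem13:
  fixes r :: "('i \<times> 'i) set"
  assumes "Card_order r" and "Field r = UNIV"
    and "(card_of (UNIV :: 'i set), card_of (UNIV :: real set)) \<in> ordIso"
    and "non_N_eq_c"
  shows "strongly_c_algebrable (ND r)"
proof -
  have "infinite (UNIV::'i set)"
    using assms(3) card_of_ordIso infinite_UNIV_char_0 bij_betw_finite by blast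
  then have no_greatest: "\<And>\<gamma>. \<exists>\<alpha>. (\<gamma>::'i) \<in> underS r \<alpha>"
    using Card_order_infinite_no_greatest[OF assms(1,2)] by blast
  obtain S where S: "null_exhaustion r S" using null_exhaustion_exists[OF assms] .
  then have covers: "\<forall>x\<in>{0..1}. \<exists>\<alpha>. x \<in> S \<alpha>"
    using no_greatest unfolding null_exhaustion_def by meson
  obtain B where B: "Qspace.independent B" "(card_of B, card_of (UNIV::real set)) \<in> ordIso"
    using Qspace_independent_continuum .
  let ?X = "exp_family S ` B"
  have "?X \<subseteq> seq_carrier"
    using S unfolding null_exhaustion_def seq_carrier_def exp_family_def by (force simp: indicator_def)
  moreover have "(card_of ?X, card_of (UNIV::real set)) \<in> ordIso"
  proof -
    have "(card_of B, card_of ?X) \<in> ordIso"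
      using inj_on_imp_bij_betw[OF alg_indep_exp_family(1)[OF B(1) covers]] card_of_ordIso by blast
    then show ?thesis using ordIso_transitive[OF ordIso_symmetric B(2)] by blast
  qed
  moreover have "F \<in> ND r" if "F \<in> gen_alg ?X" "F \<noteq> (\<lambda>\<alpha> x. 0)" for F
    using gen_alg_exp_family[OF that(1)] indicator_mult_continuous_in_ND[OF assms(2) no_greatest S]
      that(2) continuous_on_subset by blast
  ultimately show ?thesis
    unfolding strongly_c_algebrable_def using alg_indep_exp_family(2)[OF B(1) covers] by blast
qed

end
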